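(* Let $L\ge2$, $k\ge2$ be integers and $\kappa:\{1,\dots,k-1\}\to\{0,\dots,L-1\}$ a map. Let $(a(n))_{n=0}^\infty$ be the $(L,k,\kappa)$-TM sequence built with the map $(s,n)\mapsto\kappa(s)$ (independent of $n$). Then $(a(n))_{n=0}^\infty$ is ultimately periodic if and only if $$s\,\kappa(1)\equiv\kappa(s)\pmod L\ \text{ for all }1\le s\le k-1,\quad\text{and}\quad \kappa(k-1)\equiv0\pmod L.$$ Moreover, if $(a(n))_{n=0}^\infty$ is not ultimately periodic, then none of its equally spaced subsequences $(a(N+tl))_{t=0}^\infty$ ($N\ge0$, $l>0$) is ultimately periodic.
   Context: Let $a_0,\dots,a_{L-1}$ be pairwise distinct complex numbers and $f$ the map on $\{a_0,\dots,a_{L-1}\}$ with $f(a_i)=a_{i+1}$ (indices mod $L$), extended letterwise to finite words; $f^j$ its $j$-fold iterate, $f^0$ the identity. For a map $\kappa':\{1,\dots,k-1\}\times\mathbb{N}\to\{0,\dots,L-1\}$ define $A_0=a_0$, $A_{n+1}=A_n\,f^{\kappa'(1,n)}(A_n)\cdots f^{\kappa'(k-1,n)}(A_n)$ (concatenation); the limit infinite word, indexed from $0$, is the $(L,k,\kappa')$-TM sequence. A sequence $(b(n))$ is ultimately periodic if there are $N\ge0$, $l>0$ with $b(n)=b(n+l)$ for all $n\ge N$. *)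

theory Defs
  imports Complex_Main "HOL-Number_Theory.Cong"
begin

definition tm_f :: "(nat \<Rightarrow> complex) \<Rightarrow> nat \<Rightarrow> complex \<Rightarrow> complex" where
  "tm_f a L z = a (Suc (THE i. i < L \<and> a i = z) mod L)"

fun tm_word :: "(nat \<Rightarrow> complex) \<Rightarrow> nat \<Rightarrow> nat \<Rightarrow> (nat \<Rightarrow> nat \<Rightarrow> nat) \<Rightarrow> nat \<Rightarrow> complex list" where
  "tm_word a L k \<kappa>' 0 = [a 0]"
| "tm_word a L k \<kappa>' (Suc n) =
     tm_word a L k \<kappa>' n @
     concat (map (\<lambda>s. map (tm_f a L ^^ \<kappa>' s n) (tm_word a L k \<kappa>' n)) [1..<k])"

text \<open>The limit infinite word (indexed from 0): since |A_m| = k^m > m for k >= 2 and each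
  A_n is a prefix of A_(n+1), its m-th letter is the m-th letter of A_m.\<close>
definition tm_seq :: "(nat \<Rightarrow> complex) \<Rightarrow> nat \<Rightarrow> nat \<Rightarrow> (nat \<Rightarrow> nat \<Rightarrow> nat) \<Rightarrow> nat \<Rightarrow> complex" where
  "tm_seq a L k \<kappa>' m = tm_word a L k \<kappa>' m ! m"

definition ultimately_periodic :: "(nat \<Rightarrow> 'b) \<Rightarrow> bool" where
  "ultimately_periodic b \<longleftrightarrow> (\<exists>N l. l > 0 \<and> (\<forall>n\<ge>N. b n = b (n + l)))"

end

theory Submission
  imports Defs
begin

text \<open>The \<open>m\<close>-th letter of the sequence is \<open>a (w m mod L)\<close>, where \<open>w m\<close> is the sum of
  \<open>\<kappa>\<close> over the nonzero base-\<open>k\<close> digits of \<open>m\<close>. Under the congruences, \<open>w m \<equiv> \<kappa> 1 * m (mod L)\<close>,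
  so the sequence has period \<open>L\<close>. Conversely, \<open>w\<close> is additive under concatenation of digit
  strings, so periodicity of \<open>w mod L\<close> along a progression \<open>N + t * l\<close> spreads to all of \<open>\<nat>\<close>:
  appending suitable digits to any \<open>x\<close> lands in the progression. A period \<open>P\<close> divides some
  \<open>k^i * (k^c - 1)\<close>, and trailing zeros do not change \<open>w\<close>, so \<open>w (y + k^c - 1) \<equiv> w y\<close>.
  Comparing \<open>w s\<close> with \<open>w (k^c + s - 1) = \<kappa> 1 + w (s - 1)\<close> for \<open>1 \<le> s \<le> k\<close> gives the
  congruences.\<close>

lemma exists_dvd_power_mult_power_minus_one:
  fixes k P :: nat
  assumes "P > 0" "k > 0"
  obtains i c where "c \<ge> 1" "P dvd k ^ i * (k ^ c - 1)"
proof -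
  have "\<not> inj_on (\<lambda>i. k ^ i mod P) {..P}"
  proof (rule pigeonhole)
    have "(\<lambda>i. k ^ i mod P) ` {..P} \<subseteq> {..<P}"
      using assms(1) by auto
    then have "card ((\<lambda>i. k ^ i mod P) ` {..P}) \<le> P"
      by (metis card_lessThan card_mono finite_lessThan)
    then show "card ((\<lambda>i. k ^ i mod P) ` {..P}) < card {..P}"
      by simp
  qed
  then obtain i j where "i < j" "k ^ i mod P = k ^ j mod P"
    unfolding inj_on_def by (metis linorder_neqE_nat)
  moreover have "k ^ j \<ge> k ^ i"
    using \<open>i < j\<close> assms(2) by (simp add: power_increasing)
  ultimately have "P dvd k ^ j - k ^ i"
    using mod_eq_dvd_iff_nat[where m = "k ^ j" and n = "k ^ i" and q = P] by simp
  moreover have "k ^ j - k ^ i = k ^ i * (k ^ (j - i) - 1)"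
    using \<open>i < j\<close> by (simp add: diff_mult_distrib2 flip: power_add)
  ultimately show thesis
    using that[of "j - i" i] \<open>i < j\<close> by simp
qed

lemma ultimately_periodic_comp_inj_on_iff:
  assumes "inj_on g A" "\<And>n. f n \<in> A"
  shows "ultimately_periodic (\<lambda>n. g (f n)) \<longleftrightarrow> ultimately_periodic f"
  unfolding ultimately_periodic_def using assms by (metis inj_onD)

text \<open>Block \<open>0\<close> of \<open>A (n+1)\<close> is \<open>A n\<close> itself, so the digit \<open>0\<close> carries weight \<open>0\<close>; the guard
  \<open>k < 2\<close> only makes the recursion total.\<close>

definition digit_weight :: "(nat \<Rightarrow> nat) \<Rightarrow> nat \<Rightarrow> nat" where
  "digit_weight \<kappa> s = (if s = 0 then 0 else \<kappa> s)"

function weighted_digit_sum :: "nat \<Rightarrow> (nat \<Rightarrow> nat) \<Rightarrow> nat \<Rightarrow> nat" where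
  "weighted_digit_sum k \<kappa> n =
     (if n = 0 \<or> k < 2 then 0
      else digit_weight \<kappa> (n mod k) + weighted_digit_sum k \<kappa> (n div k))"
  by pat_completeness auto
termination
  by (relation "measure (\<lambda>(k, \<kappa>, n). n)") auto

declare weighted_digit_sum.simps [simp del]

lemma weighted_digit_sum_0 [simp]: "weighted_digit_sum k \<kappa> 0 = 0"
  by (simp add: weighted_digit_sum.simps)

lemma weighted_digit_sum_step:
  "k \<ge> 2 \<Longrightarrow> weighted_digit_sum k \<kappa> n =
     digit_weight \<kappa> (n mod k) + weighted_digit_sum k \<kappa> (n div k)"
  by (cases "n = 0") (auto simp: weighted_digit_sum.simps[of k \<kappa> n] digit_weight_def)

lemma weighted_digit_sum_digit:
  "k \<ge> 2 \<Longrightarrow> s < k \<Longrightarrow> weighted_digit_sum k \<kappa> s = digit_weight \<kappa> s"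
  using weighted_digit_sum_step[of k \<kappa> s] by simp

lemma weighted_digit_sum_append:
  assumes "k \<ge> 2" "r < k ^ j"
  shows "weighted_digit_sum k \<kappa> (q * k ^ j + r) =
    weighted_digit_sum k \<kappa> q + weighted_digit_sum k \<kappa> r"
  using assms(2)
proof (induction j arbitrary: r)
  case 0
  then show ?case by simp
next
  case (Suc j)
  have "q * k ^ Suc j + r = r mod k + k * (q * k ^ j + r div k)"
    by (simp add: algebra_simps)
  then have mod: "(q * k ^ Suc j + r) mod k = r mod k"
    and div: "(q * k ^ Suc j + r) div k = q * k ^ j + r div k"
    using assms(1) by simp_all
  have "r div k < k ^ j"
    using Suc.prems assms(1) by (simp add: div_less_iff_less_mult mult.commute)
  then show ?case
    using assms(1) Suc.IH weighted_digit_sum_step[of k \<kappa> r]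
      weighted_digit_sum_step[of k \<kappa> "q * k ^ Suc j + r"] mod div by simp
qed

lemma weighted_digit_sum_append_cong_iff:
  assumes "k \<ge> 2" "r < k ^ j"
  shows "[weighted_digit_sum k \<kappa> (x * k ^ j + r) = weighted_digit_sum k \<kappa> (y * k ^ j + r)] (mod L)
     \<longleftrightarrow> [weighted_digit_sum k \<kappa> x = weighted_digit_sum k \<kappa> y] (mod L)"
  using weighted_digit_sum_append[OF assms] by (simp add: cong_add_rcancel_nat)

lemma tm_f_funpow:
  assumes "inj_on a {..<L}" "i < L"
  shows "(tm_f a L ^^ j) (a i) = a ((i + j) mod L)"
proof (induction j)
  case 0
  then show ?case using assms(2) by simp
next
  case (Suc j)
  have "(THE i'. i' < L \<and> a i' = a ((i + j) mod L)) = (i + j) mod L"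
    using assms by (intro the_equality) (auto dest: inj_onD)
  then show ?case
    using Suc by (simp add: tm_f_def mod_Suc_eq)
qed

lemma nth_concat_map_equal_length:
  assumes "\<forall>x\<in>set xs. length (F x) = m" "i < length xs" "r < m"
  shows "concat (map F xs) ! (i * m + r) = F (xs ! i) ! r"
  using assms
proof (induction xs arbitrary: i)
  case Nil
  then show ?case by simp
next
  case (Cons x xs)
  then show ?case by (cases i) (simp_all add: nth_append)
qed

lemma length_tm_word: "k \<ge> 1 \<Longrightarrow> length (tm_word a L k \<kappa>' n) = k ^ n"
  by (induction n) (simp_all add: length_concat comp_def sum_list_triv algebra_simps)

lemma tm_word_Suc_eq_concat:
  assumes "k \<ge> 1"
  shows "tm_word a L k (\<lambda>s n. \<kappa> s) (Suc n) =
    concat (map (\<lambda>s. map (tm_f a L ^^ digit_weight \<kappa> s) (tm_word a L k (\<lambda>s n. \<kappa> s) n)) [0..<k])"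
proof -
  have tail: "map (\<lambda>s. map (tm_f a L ^^ digit_weight \<kappa> s) w) [Suc 0..<k]
      = map (\<lambda>s. map (tm_f a L ^^ \<kappa> s) w) [Suc 0..<k]" for w
    by (rule map_cong) (auto simp: digit_weight_def)
  show ?thesis
    unfolding tm_word.simps(2) upt_conv_Cons[OF assms[unfolded One_nat_def Suc_le_eq]]
    by (simp add: tail digit_weight_def[of _ 0])
qed

lemma nth_tm_word:
  assumes "inj_on a {..<L}" "L > 0" "k \<ge> 2" "i < k ^ n"
  shows "tm_word a L k (\<lambda>s n. \<kappa> s) n ! i = a (weighted_digit_sum k \<kappa> i mod L)"
  using assms(4)
proof (induction n arbitrary: i)
  case 0
  then show ?case by simp
next
  case (Suc n)
  let ?A = "tm_word a L k (\<lambda>s n. \<kappa> s) n"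
  define s r where "s = i div k ^ n" and "r = i mod k ^ n"
  have i: "i = s * k ^ n + r" by (simp add: s_def r_def div_mult_mod_eq)
  have r: "r < k ^ n" and s: "s < k"
    using Suc.prems assms(3) by (simp_all add: s_def r_def div_less_iff_less_mult)
  have "k \<ge> 1"
    using assms(3) by simp
  have "tm_word a L k (\<lambda>s n. \<kappa> s) (Suc n) ! i = (tm_f a L ^^ digit_weight \<kappa> s) (?A ! r)"
    using nth_concat_map_equal_length[of "[0..<k]" "\<lambda>s. map (tm_f a L ^^ digit_weight \<kappa> s) ?A"]
      \<open>k \<ge> 1\<close> s r
    unfolding tm_word_Suc_eq_concat[OF \<open>k \<ge> 1\<close>] by (simp add: length_tm_word i)
  also have "\<dots> = a ((weighted_digit_sum k \<kappa> r mod L + digit_weight \<kappa> s) mod L)"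
    using Suc.IH[OF r] tm_f_funpow[OF assms(1)] assms(2) by simp
  also have "\<dots> = a (weighted_digit_sum k \<kappa> i mod L)"
    using weighted_digit_sum_append[OF assms(3) r, of \<kappa> s] weighted_digit_sum_digit[OF assms(3) s]
    by (simp add: i mod_add_right_eq add.commute)
  finally show ?case .
qed

lemma tm_seq_eq_weighted_digit_sum:
  assumes "inj_on a {..<L}" "L > 0" "k \<ge> 2"
  shows "tm_seq a L k (\<lambda>s n. \<kappa> s) m = a (weighted_digit_sum k \<kappa> m mod L)"
proof -
  have "m < 2 ^ m" by (rule less_exp)
  also have "(2::nat) ^ m \<le> k ^ m" using assms(3) by (simp add: power_mono)
  finally show ?thesis unfolding tm_seq_def by (rule nth_tm_word[OF assms])
qed

definition tm_periodicity_condition :: "nat \<Rightarrow> nat \<Rightarrow> (nat \<Rightarrow> nat) \<Rightarrow> bool" where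
  "tm_periodicity_condition L k \<kappa> \<longleftrightarrow>
     (\<forall>s\<in>{1..k-1}. [s * \<kappa> 1 = \<kappa> s] (mod L)) \<and> [\<kappa> (k-1) = 0] (mod L)"

lemma weighted_digit_sum_cong_linear:
  assumes "k \<ge> 2" and digits: "\<forall>s<k. [digit_weight \<kappa> s = s * c] (mod L)"
    and base: "[k * c = c] (mod L)"
  shows "[weighted_digit_sum k \<kappa> n = n * c] (mod L)"
proof (induction n rule: less_induct)
  case (less n)
  show ?case
  proof (cases "n = 0")
    case False
    have "n mod k < k" "n div k < n"
      using assms(1) False by simp_all
    then have "[digit_weight \<kappa> (n mod k) + weighted_digit_sum k \<kappa> (n div k)
        = n mod k * c + n div k * c] (mod L)"
      using digits less.IH by (simp add: cong_add)
    also have "[n div k * c = n div k * (k * c)] (mod L)"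
      using cong_scalar_left[OF cong_sym[OF base]] .
    then have "[n mod k * c + n div k * c = n mod k * c + n div k * (k * c)] (mod L)"
      by (rule cong_add_lcancel_nat[THEN iffD2])
    also have "n mod k * c + n div k * (k * c) = (n mod k + n div k * k) * c"
      by (simp only: distrib_right mult.assoc)
    also have "\<dots> = n * c"
      by simp
    finally show ?thesis
      using weighted_digit_sum_step[OF assms(1), of \<kappa> n] by simp
  qed simp
qed

lemma tm_periodicity_condition_imp_cong_linear:
  assumes "k \<ge> 2" and cond: "tm_periodicity_condition L k \<kappa>"
  shows "[weighted_digit_sum k \<kappa> n = n * \<kappa> 1] (mod L)"
proof (rule weighted_digit_sum_cong_linear[OF assms(1)])
  show "\<forall>s<k. [digit_weight \<kappa> s = s * \<kappa> 1] (mod L)"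
    using cond by (auto simp: tm_periodicity_condition_def digit_weight_def cong_sym)
  have "k - 1 \<in> {1..k-1}"
    using assms(1) by simp
  then have "[(k - 1) * \<kappa> 1 = 0] (mod L)"
    using cond unfolding tm_periodicity_condition_def by (blast intro: cong_trans)
  then have "[(k - 1) * \<kappa> 1 + \<kappa> 1 = 0 + \<kappa> 1] (mod L)"
    by (rule cong_add_rcancel_nat[THEN iffD2])
  moreover have "(k - 1) * \<kappa> 1 + \<kappa> 1 = k * \<kappa> 1"
    using assms(1) by (simp add: diff_mult_distrib)
  ultimately show "[k * \<kappa> 1 = \<kappa> 1] (mod L)"
    by simp
qed

lemma ultimately_periodic_of_tm_periodicity_condition:
  assumes "k \<ge> 2" "L > 0" "tm_periodicity_condition L k \<kappa>"
  shows "ultimately_periodic (\<lambda>n. weighted_digit_sum k \<kappa> n mod L)"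
proof -
  have period: "[weighted_digit_sum k \<kappa> (n + L) = weighted_digit_sum k \<kappa> n] (mod L)" for n
  proof -
    have "[weighted_digit_sum k \<kappa> (n + L) = (n + L) * \<kappa> 1] (mod L)"
      by (rule tm_periodicity_condition_imp_cong_linear[OF assms(1,3)])
    also have "[L * \<kappa> 1 = 0] (mod L)"
      by (simp add: cong_0_iff)
    then have "[(n + L) * \<kappa> 1 = n * \<kappa> 1 + 0] (mod L)"
      unfolding distrib_right by (rule cong_add_lcancel_nat[THEN iffD2])
    also have "[n * \<kappa> 1 + 0 = weighted_digit_sum k \<kappa> n] (mod L)"
      using cong_sym[OF tm_periodicity_condition_imp_cong_linear[OF assms(1,3)]] by simp
    finally show ?thesis .
  qed
  show ?thesis
    unfolding ultimately_periodic_def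
    using assms(2) period[unfolded cong_def] by (intro exI[of _ 0] exI[of _ L]) simp
qed

lemma weighted_digit_sum_periodic_of_progression:
  assumes "k \<ge> 2" "l > 0"
    and "ultimately_periodic (\<lambda>t. weighted_digit_sum k \<kappa> (N + t * l) mod L)"
  obtains P where "P > 0"
    "\<And>x. [weighted_digit_sum k \<kappa> (x + P) = weighted_digit_sum k \<kappa> x] (mod L)"
proof -
  let ?D = "weighted_digit_sum k \<kappa>"
  obtain T p where "p > 0"
    and per: "\<And>t. t \<ge> T \<Longrightarrow> [?D (N + t * l) = ?D (N + (t + p) * l)] (mod L)"
    using assms(3) unfolding ultimately_periodic_def cong_def by blast
  have per_iter: "[?D (N + t * l) = ?D (N + (t + m * p) * l)] (mod L)" if "t \<ge> T" for t m
  proof (induction m)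
    case (Suc m)
    have "[?D (N + (t + m * p) * l) = ?D (N + (t + m * p + p) * l)] (mod L)"
      using per that by simp
    from cong_trans[OF Suc.IH this] show ?case
      by (simp add: algebra_simps)
  qed simp
  define J where "J = N + T * l + l"
  have J: "N + T * l + l < k ^ J"
  proof -
    have "J < 2 ^ J" by (rule less_exp)
    also have "(2::nat) ^ J \<le> k ^ J" using assms(1) by (simp add: power_mono)
    finally show ?thesis by (simp add: J_def)
  qed
  have "[?D (x + p * l) = ?D x] (mod L)" for x
  proof -
    define q m0 where "q = x * k ^ J div l" and "m0 = x * k ^ J mod l"
    \<comment> \<open>Appending the \<open>J\<close> digits of \<open>r\<close> moves \<open>x\<close> into the progression beyond \<open>T\<close>, and
      moves \<open>x + p * l\<close> there too, \<open>k ^ J\<close> periods further.\<close>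
    define r where "r = N + T * l + (l - m0)"
    have "m0 < l" using assms(2) by (simp add: m0_def)
    then have r: "r < k ^ J" using J by (simp add: r_def)
    have "x * k ^ J = q * l + m0" by (simp add: q_def m0_def)
    then have "x * k ^ J + r = N + (T + q + 1) * l"
      and "(x + p * l) * k ^ J + r = N + (T + q + 1 + k ^ J * p) * l"
      using \<open>m0 < l\<close> by (simp_all add: r_def algebra_simps)
    then have "[?D (x * k ^ J + r) = ?D ((x + p * l) * k ^ J + r)] (mod L)"
      using per_iter[of "T + q + 1" "k ^ J"] by simp
    then have "[?D x = ?D (x + p * l)] (mod L)"
      using weighted_digit_sum_append_cong_iff[OF assms(1) r] by simp
    then show ?thesis
      by (rule cong_sym)
  qed
  then show thesis
    using that[of "p * l"] \<open>p > 0\<close> assms(2) by simp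
qed

lemma weighted_digit_sum_shift_invariant_power_minus_one:
  assumes "k \<ge> 2" "P > 0"
    and per: "\<And>x. [weighted_digit_sum k \<kappa> (x + P) = weighted_digit_sum k \<kappa> x] (mod L)"
  obtains c where "c \<ge> 1"
    "\<And>y. [weighted_digit_sum k \<kappa> (y + (k ^ c - 1)) = weighted_digit_sum k \<kappa> y] (mod L)"
proof -
  let ?D = "weighted_digit_sum k \<kappa>"
  have "k > 0"
    using assms(1) by simp
  then obtain i c where "c \<ge> 1" "P dvd k ^ i * (k ^ c - 1)"
    by (rule exists_dvd_power_mult_power_minus_one[OF assms(2)])
  then obtain m where m: "k ^ i * (k ^ c - 1) = P * m"
    by (auto elim: dvdE)
  have per_iter: "[?D (x + n * P) = ?D x] (mod L)" for x n
  proof (induction n)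
    case (Suc n)
    from cong_trans[OF per[of "x + n * P"] Suc.IH] show ?case
      by (simp add: algebra_simps)
  qed simp
  have "[?D (y + (k ^ c - 1)) = ?D y] (mod L)" for y
  proof -
    have "(y + (k ^ c - 1)) * k ^ i + 0 = y * k ^ i + m * P"
      using m by (simp add: algebra_simps)
    then have "[?D ((y + (k ^ c - 1)) * k ^ i + 0) = ?D (y * k ^ i + 0)] (mod L)"
      using per_iter by simp
    then show ?thesis
      using weighted_digit_sum_append_cong_iff[OF assms(1), of 0 i] \<open>k > 0\<close> by simp
  qed
  with \<open>c \<ge> 1\<close> that show thesis by blast
qed

lemma tm_periodicity_condition_of_shift_invariant:
  assumes "k \<ge> 2" "c \<ge> 1"
    and inv: "\<And>y. [weighted_digit_sum k \<kappa> (y + (k ^ c - 1)) = weighted_digit_sum k \<kappa> y] (mod L)"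
  shows "tm_periodicity_condition L k \<kappa>"
proof -
  let ?D = "weighted_digit_sum k \<kappa>"
  have "k \<le> k ^ c"
    using assms(1,2) power_increasing[of 1 c k] by simp
  have leading_one: "?D (k ^ c + m) = \<kappa> 1 + ?D m" if "m < k ^ c" for m
    using weighted_digit_sum_append[OF assms(1) that, of \<kappa> 1]
      weighted_digit_sum_digit[OF assms(1), of 1 \<kappa>] assms(1)
    by (simp add: digit_weight_def)
  have shift: "[?D s = \<kappa> 1 + digit_weight \<kappa> (s - 1)] (mod L)" if "1 \<le> s" "s \<le> k" for s
  proof -
    have "s + (k ^ c - 1) = k ^ c + (s - 1)" "s - 1 < k ^ c" "s - 1 < k"
      using that \<open>k \<le> k ^ c\<close> by auto
    then have "?D (s + (k ^ c - 1)) = \<kappa> 1 + digit_weight \<kappa> (s - 1)"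
      using leading_one[of "s - 1"] weighted_digit_sum_digit[OF assms(1), of "s - 1" \<kappa>]
      by (simp only:)
    then show ?thesis
      using cong_sym[OF inv[of s]] by (simp only:)
  qed
  have linear: "[digit_weight \<kappa> s = s * \<kappa> 1] (mod L)" if "s < k" for s
    using that
  proof (induction s)
    case (Suc s)
    have "[digit_weight \<kappa> (Suc s) = \<kappa> 1 + digit_weight \<kappa> s] (mod L)"
      using shift[of "Suc s"] weighted_digit_sum_digit[OF assms(1) Suc.prems] Suc.prems by simp
    also have "[\<kappa> 1 + digit_weight \<kappa> s = \<kappa> 1 + s * \<kappa> 1] (mod L)"
      using Suc by (simp add: cong_add_lcancel_nat)
    finally show ?case
      by simp
  qed (simp add: digit_weight_def)
  have "?D k = \<kappa> 1"
    using weighted_digit_sum_append[OF assms(1), of 0 1 \<kappa> 1]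
      weighted_digit_sum_digit[OF assms(1), of 1 \<kappa>] assms(1)
    by (simp add: digit_weight_def)
  then have "[\<kappa> 1 + 0 = \<kappa> 1 + \<kappa> (k - 1)] (mod L)"
    using shift[of k] assms(1) by (simp add: digit_weight_def)
  then have "[0 = \<kappa> (k - 1)] (mod L)"
    by (rule cong_add_lcancel_nat[THEN iffD1])
  then have "[\<kappa> (k - 1) = 0] (mod L)"
    by (rule cong_sym)
  moreover have "[s * \<kappa> 1 = \<kappa> s] (mod L)" if "s \<in> {1..k-1}" for s
    using linear[of s] that by (auto simp: digit_weight_def cong_sym_eq)
  ultimately show ?thesis
    unfolding tm_periodicity_condition_def by blast
qed

lemma tm_periodicity_condition_of_ultimately_periodic_progression:
  assumes "k \<ge> 2" "l > 0"
    and "ultimately_periodic (\<lambda>t. weighted_digit_sum k \<kappa> (N + t * l) mod L)"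
  shows "tm_periodicity_condition L k \<kappa>"
proof -
  obtain P where "P > 0"
    "\<And>x. [weighted_digit_sum k \<kappa> (x + P) = weighted_digit_sum k \<kappa> x] (mod L)"
    using weighted_digit_sum_periodic_of_progression[OF assms] by blast
  then obtain c where "c \<ge> 1"
    "\<And>y. [weighted_digit_sum k \<kappa> (y + (k ^ c - 1)) = weighted_digit_sum k \<kappa> y] (mod L)"
    using weighted_digit_sum_shift_invariant_power_minus_one[OF assms(1)] by blast
  then show ?thesis
    by (rule tm_periodicity_condition_of_shift_invariant[OF assms(1)])
qed

theorem corollary3p1:
  fixes L k :: nat and \<kappa> :: "nat \<Rightarrow> nat" and a :: "nat \<Rightarrow> complex"
  assumes "L \<ge> 2" and "k \<ge> 2"
    and "inj_on a {..<L}"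
    and "\<forall>s\<in>{1..k-1}. \<kappa> s < L"
  shows "(ultimately_periodic (tm_seq a L k (\<lambda>s n. \<kappa> s)) \<longleftrightarrow>
           ((\<forall>s\<in>{1..k-1}. [s * \<kappa> 1 = \<kappa> s] (mod L)) \<and> [\<kappa> (k-1) = 0] (mod L)))
       \<and> (\<not> ultimately_periodic (tm_seq a L k (\<lambda>s n. \<kappa> s)) \<longrightarrow>
           (\<forall>N l. l > 0 \<longrightarrow> \<not> ultimately_periodic (\<lambda>t. tm_seq a L k (\<lambda>s n. \<kappa> s) (N + t * l))))"
proof -
  have "L > 0"
    using assms(1) by simp
  let ?S = "tm_seq a L k (\<lambda>s n. \<kappa> s)"
  let ?D = "\<lambda>n. weighted_digit_sum k \<kappa> n mod L"
  have progression:
    "ultimately_periodic (\<lambda>t. ?S (N + t * l)) \<longleftrightarrow> ultimately_periodic (\<lambda>t. ?D (N + t * l))" for N l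
    using ultimately_periodic_comp_inj_on_iff[OF assms(3), of "\<lambda>t. ?D (N + t * l)"] \<open>L > 0\<close>
    by (simp add: tm_seq_eq_weighted_digit_sum[OF assms(3) \<open>L > 0\<close> assms(2)])
  have condition: "tm_periodicity_condition L k \<kappa>"
    if "l > 0" "ultimately_periodic (\<lambda>t. ?S (N + t * l))" for N l
    using tm_periodicity_condition_of_ultimately_periodic_progression[OF assms(2)] that progression
    by blast
  have "ultimately_periodic ?S \<longleftrightarrow> tm_periodicity_condition L k \<kappa>"
    using condition[of 1 0] progression[of 0 1]
      ultimately_periodic_of_tm_periodicity_condition[OF assms(2) \<open>L > 0\<close>]
    by auto
  with condition show ?thesis
    unfolding tm_periodicity_condition_def by blast
qed

end
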